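(* Let $G_1 \le G_2$ be groups. Then $\nu(G_1) \le \nu(G_2)$, and equality holds if $[G_2 : G_1] < \infty$.
   Context: For a group $G$, the free subgroup rank is $\nu(G) = \max\{ n \ge 0 : (F_2)^n \text{ embeds into } G\} \in \mathbb{N}_0 \cup \{\infty\}$, where $F_2$ is the free group of rank two and $(F_2)^n$ is the $n$-fold direct product. *)

theory Defs
  imports "HOL-Algebra.Algebra" "HOL-Library.Extended_Nat"
begin

text \<open>A letter is a pair (generator, exponent sign): generator False = a, True = b;
  sign True means the generator itself, False its inverse.\<close>

type_synonym f2_letter = "bool \<times> bool"

definition f2_inv_letter :: "f2_letter \<Rightarrow> f2_letter" where
  "f2_inv_letter x = (fst x, \<not> snd x)"

definition f2_reduced :: "f2_letter list \<Rightarrow> bool" where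
  "f2_reduced w \<longleftrightarrow> (\<forall>i. Suc i < length w \<longrightarrow> w ! Suc i \<noteq> f2_inv_letter (w ! i))"

text \<open>Free reduction via a stack (the stack holds the reduced word in reverse).\<close>
fun f2_push :: "f2_letter list \<Rightarrow> f2_letter \<Rightarrow> f2_letter list" where
  "f2_push [] x = [x]"
| "f2_push (y # s) x = (if y = f2_inv_letter x then s else x # y # s)"

definition f2_reduce :: "f2_letter list \<Rightarrow> f2_letter list" where
  "f2_reduce w = rev (foldl f2_push [] w)"

definition F2 :: "f2_letter list monoid" where
  "F2 = \<lparr> carrier = {w. f2_reduced w},
          monoid.mult = (\<lambda>u v. f2_reduce (u @ v)),
          one = [] \<rparr>"

definition F2_power :: "nat \<Rightarrow> (nat \<Rightarrow> f2_letter list) monoid" where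
  "F2_power n = product_group {..<n} (\<lambda>_. F2)"

definition F2_power_embeds :: "nat \<Rightarrow> ('a, 'b) monoid_scheme \<Rightarrow> bool" where
  "F2_power_embeds n G \<longleftrightarrow>
     (\<exists>h. h \<in> hom (F2_power n) G \<and> inj_on h (carrier (F2_power n)))"

text \<open>nu G = max {n. (F2)^n embeds in G} in N_0 extended by infinity
  (the set is nonempty and downward closed, so the max is the supremum).\<close>
definition free_subgroup_rank :: "('a, 'b) monoid_scheme \<Rightarrow> enat" where
  "free_subgroup_rank G = Sup {enat n | n. F2_power_embeds n G}"

end

theory Submission
  imports Defs
begin

text \<open>
  Monotonicity is immediate: an embedding into \<open>H\<close> is an embedding into \<open>G\<close>.
  For the converse, if \<open>H\<close> has finite index then \<open>g\<^sup>N \<in> H\<close> for all \<open>g \<in> G\<close> with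
  \<open>N = [G : H]!\<close> (pigeonhole on the cosets \<open>H g\<^sup>i\<close>). Replacing every letter of a
  reduced word by its \<open>N\<close>-th power is an injective endomorphism of \<open>F\<^sub>2\<close>; applied
  coordinatewise to \<open>F\<^sub>2\<^sup>n\<close> and followed by an embedding \<open>F\<^sub>2\<^sup>n \<rightarrow> G\<close>, it sends every
  one-letter element to an \<open>N\<close>-th power, hence into \<open>H\<close>. As these elements generate
  \<open>F\<^sub>2\<^sup>n\<close>, the composite embeds \<open>F\<^sub>2\<^sup>n\<close> into \<open>H\<close>.
\<close>

lemma f2_inv_letter_neq [simp]: "f2_inv_letter x \<noteq> x" "x \<noteq> f2_inv_letter x"
  by (auto simp: f2_inv_letter_def prod_eq_iff)

lemma f2_inv_letter_inv [simp]: "f2_inv_letter (f2_inv_letter x) = x"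
  by (simp add: f2_inv_letter_def)

lemma f2_inv_letter_eq_swap: "y = f2_inv_letter x \<longleftrightarrow> x = f2_inv_letter y"
  by auto

lemma f2_reduced_Nil [simp]: "f2_reduced []"
  and f2_reduced_singleton [simp]: "f2_reduced [x]"
  by (auto simp: f2_reduced_def)

lemma f2_reduced_Cons_Cons [simp]:
  "f2_reduced (x # y # w) \<longleftrightarrow> y \<noteq> f2_inv_letter x \<and> f2_reduced (y # w)"
  unfolding f2_reduced_def by (auto simp: All_less_Suc2[symmetric] less_Suc_eq_0_disj)

lemma f2_reduced_Cons:
  "f2_reduced (x # w) \<longleftrightarrow> f2_reduced w \<and> (w = [] \<or> hd w \<noteq> f2_inv_letter x)"
  by (cases w) auto

lemma f2_reduced_replicate_append:
  assumes "f2_reduced w" and "w = [] \<or> hd w \<noteq> f2_inv_letter x"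
  shows "f2_reduced (replicate k x @ w)"
  using assms by (induction k) (auto simp: f2_reduced_Cons hd_append)

lemma foldl_f2_push_reduced:
  assumes "f2_reduced w" and "s = [] \<or> w = [] \<or> hd s \<noteq> f2_inv_letter (hd w)"
  shows "foldl f2_push s w = rev w @ s"
  using assms
proof (induction w arbitrary: s)
  case (Cons x w)
  have "f2_push s x = x # s"
    using Cons.prems(2) by (cases s) auto
  moreover have "foldl f2_push (x # s) w = rev w @ x # s"
    using Cons.prems(1) by (intro Cons.IH) (auto simp: f2_reduced_Cons f2_inv_letter_eq_swap)
  ultimately show ?case by simp
qed simp

lemma f2_reduce_reduced: "f2_reduced w \<Longrightarrow> f2_reduce w = w"
  unfolding f2_reduce_def by (simp add: foldl_f2_push_reduced)

lemma foldl_f2_push_replicate: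
  "s = [] \<or> hd s \<noteq> f2_inv_letter x \<Longrightarrow> foldl f2_push s (replicate k x) = replicate k x @ s"
  using foldl_f2_push_reduced[of "replicate k x" s] f2_reduced_replicate_append[of "[]" x k]
  by (cases k) (auto simp: replicate_app_Cons_same)

lemma foldl_f2_push_replicate_cancel:
  "foldl f2_push (replicate k (f2_inv_letter x) @ s) (replicate k x) = s"
  by (induction k) simp_all

definition f2_stretch :: "nat \<Rightarrow> f2_letter list \<Rightarrow> f2_letter list" where
  "f2_stretch N w = concat (map (replicate N) w)"

lemma f2_stretch_simps [simp]:
  "f2_stretch N [] = []"
  "f2_stretch N (x # w) = replicate N x @ f2_stretch N w"
  "f2_stretch N (u @ v) = f2_stretch N u @ f2_stretch N v"
  by (simp_all add: f2_stretch_def)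

lemma rev_f2_stretch: "rev (f2_stretch N w) = f2_stretch N (rev w)"
  by (induction w) simp_all

lemma foldl_f2_push_stretch_letter:
  assumes "0 < N"
  shows "foldl f2_push (f2_stretch N s) (replicate N x) = f2_stretch N (f2_push s x)"
proof (cases s)
  case Nil
  then show ?thesis by (simp add: foldl_f2_push_replicate)
next
  case (Cons y s')
  show ?thesis
  proof (cases "y = f2_inv_letter x")
    case True
    then show ?thesis
      using Cons foldl_f2_push_replicate_cancel[of N x "f2_stretch N s'"] by simp
  next
    case False
    have "hd (f2_stretch N s) = y"
      using Cons assms by (cases N) auto
    then show ?thesis
      using Cons False by (simp add: foldl_f2_push_replicate)
  qed
qed

lemma foldl_f2_push_stretch:
  "0 < N \<Longrightarrow> foldl f2_push (f2_stretch N s) (f2_stretch N w) = f2_stretch N (foldl f2_push s w)"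
  by (induction w arbitrary: s) (simp_all add: foldl_f2_push_stretch_letter)

lemma f2_stretch_reduce: "0 < N \<Longrightarrow> f2_stretch N (f2_reduce w) = f2_reduce (f2_stretch N w)"
  unfolding f2_reduce_def using foldl_f2_push_stretch[of N "[]" w] by (simp add: rev_f2_stretch)

lemma f2_reduced_stretch: "0 < N \<Longrightarrow> f2_reduced w \<Longrightarrow> f2_reduced (f2_stretch N w)"
proof (induction w)
  case (Cons x w)
  have "f2_stretch N w = [] \<or> hd (f2_stretch N w) \<noteq> f2_inv_letter x"
    using Cons.prems by (cases w; cases N) auto
  then show ?case
    using Cons by (simp add: f2_reduced_replicate_append f2_reduced_Cons)
qed simp

lemma f2_stretch_inject: "0 < N \<Longrightarrow> f2_stretch N u = f2_stretch N v \<longleftrightarrow> u = v"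
proof (induction u arbitrary: v)
  case Nil
  then show ?case by (cases v; cases N) auto
next
  case (Cons x u)
  then show ?case by (cases v; cases N) auto
qed

lemma F2_power_mult: "x \<otimes>\<^bsub>F2_power n\<^esub> y = (\<lambda>i\<in>{..<n}. f2_reduce (x i @ y i))"
  by (simp add: F2_power_def product_group_def F2_def)

lemma F2_power_one: "\<one>\<^bsub>F2_power n\<^esub> = (\<lambda>i\<in>{..<n}. [])"
  by (simp add: F2_power_def product_group_def F2_def)

lemma F2_power_carrier: "carrier (F2_power n) = (\<Pi>\<^sub>E i\<in>{..<n}. {w. f2_reduced w})"
  by (simp add: F2_power_def F2_def)

lemma F2_power_one_closed: "\<one>\<^bsub>F2_power n\<^esub> \<in> carrier (F2_power n)"
  by (simp add: F2_power_one F2_power_carrier)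

lemma F2_power_one_mult_one: "\<one>\<^bsub>F2_power n\<^esub> \<otimes>\<^bsub>F2_power n\<^esub> \<one>\<^bsub>F2_power n\<^esub> = \<one>\<^bsub>F2_power n\<^esub>"
  by (auto simp: F2_power_one F2_power_mult f2_reduce_def intro!: restrict_ext)

definition F2_power_single :: "nat \<Rightarrow> nat \<Rightarrow> f2_letter list \<Rightarrow> nat \<Rightarrow> f2_letter list" where
  "F2_power_single n j w = (\<lambda>i\<in>{..<n}. if i = j then w else [])"

lemma F2_power_single_closed: "f2_reduced w \<Longrightarrow> F2_power_single n j w \<in> carrier (F2_power n)"
  by (simp add: F2_power_single_def F2_power_carrier)

lemma F2_power_single_mult:
  "F2_power_single n j u \<otimes>\<^bsub>F2_power n\<^esub> F2_power_single n j v = F2_power_single n j (f2_reduce (u @ v))"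
  by (auto simp: F2_power_single_def F2_power_mult f2_reduce_def)

lemma F2_power_single_Nil: "F2_power_single n j [] = \<one>\<^bsub>F2_power n\<^esub>"
  by (auto simp: F2_power_single_def F2_power_one)

lemma F2_power_eq_one:
  assumes "x \<in> carrier (F2_power n)" and "\<forall>i<n. x i = []"
  shows "x = \<one>\<^bsub>F2_power n\<^esub>"
proof (rule PiE_ext)
  show "x \<in> (\<Pi>\<^sub>E i\<in>{..<n}. {w. f2_reduced w})"
    using assms(1) by (simp only: F2_power_carrier)
  show "\<one>\<^bsub>F2_power n\<^esub> \<in> (\<Pi>\<^sub>E i\<in>{..<n}. {w. f2_reduced w})"
    using F2_power_one_closed by (simp only: F2_power_carrier)
qed (simp add: assms(2) F2_power_one)

lemma F2_power_split_first_letter: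
  assumes x: "x \<in> carrier (F2_power n)" and j: "j < n" and xj: "x j = l # w"
  shows "x(j := w) \<in> carrier (F2_power n)"
    and "F2_power_single n j [l] \<otimes>\<^bsub>F2_power n\<^esub> x(j := w) = x"
proof -
  have x_reduced: "f2_reduced (x i)" if "i < n" for i
    using x that by (auto simp: F2_power_carrier)
  have "f2_reduced w"
    using x_reduced[OF j] xj by (simp add: f2_reduced_Cons)
  then have "x(j := w) \<in> (\<Pi>\<^sub>E i\<in>insert j {..<n}. {w. f2_reduced w})"
    using x unfolding F2_power_carrier by (intro PiE_fun_upd) auto
  then show "x(j := w) \<in> carrier (F2_power n)"
    using j by (simp add: F2_power_carrier insert_absorb)
  show "F2_power_single n j [l] \<otimes>\<^bsub>F2_power n\<^esub> x(j := w) = x"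
  proof
    fix i
    have "f2_reduce (l # w) = l # w"
      using x_reduced[OF j] xj f2_reduce_reduced by metis
    moreover have "x i = undefined" if "\<not> i < n"
      using x that unfolding F2_power_carrier by (meson PiE_arb lessThan_iff)
    ultimately show "(F2_power_single n j [l] \<otimes>\<^bsub>F2_power n\<^esub> x(j := w)) i = x i"
      using x_reduced[of i] xj
      by (cases "i < n") (simp_all add: F2_power_single_def F2_power_mult f2_reduce_reduced)
  qed
qed

lemma F2_power_induct [consumes 1, case_names one single_mult]:
  assumes "x \<in> carrier (F2_power n)"
    and one: "P \<one>\<^bsub>F2_power n\<^esub>"
    and single_mult: "\<And>j l y. j < n \<Longrightarrow> y \<in> carrier (F2_power n) \<Longrightarrow> P y \<Longrightarrow>
      P (F2_power_single n j [l] \<otimes>\<^bsub>F2_power n\<^esub> y)"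
  shows "P x"
  using assms(1)
proof (induction "\<Sum>i<n. length (x i)" arbitrary: x rule: less_induct)
  case less
  show ?case
  proof (cases "\<forall>i<n. x i = []")
    case True
    with one less.prems show ?thesis
      by (metis F2_power_eq_one)
  next
    case False
    then obtain j l w where j: "j < n" and xj: "x j = l # w"
      by (meson neq_Nil_conv)
    have "(\<Sum>i<n. length ((x(j := w)) i)) < (\<Sum>i<n. length (x i))"
    proof (rule sum_strict_mono_ex1)
      show "\<forall>i\<in>{..<n}. length ((x(j := w)) i) \<le> length (x i)"
        by (simp add: xj)
      show "\<exists>i\<in>{..<n}. length ((x(j := w)) i) < length (x i)"
        using j by (intro bexI[of _ j]) (simp_all add: xj)
    qed simp
    moreover note split = F2_power_split_first_letter[OF less.prems j xj]
    ultimately have "P (x(j := w))"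
      by (intro less.hyps)
    from single_mult[OF j split(1) this, of l] show ?thesis
      by (simp only: split(2))
  qed
qed

definition F2_power_stretch :: "nat \<Rightarrow> nat \<Rightarrow> (nat \<Rightarrow> f2_letter list) \<Rightarrow> nat \<Rightarrow> f2_letter list" where
  "F2_power_stretch N n x = (\<lambda>i\<in>{..<n}. f2_stretch N (x i))"

lemma F2_power_stretch_closed:
  "0 < N \<Longrightarrow> x \<in> carrier (F2_power n) \<Longrightarrow> F2_power_stretch N n x \<in> carrier (F2_power n)"
  unfolding F2_power_stretch_def F2_power_carrier PiE_iff by (simp add: f2_reduced_stretch)

lemma F2_power_stretch_mult:
  "0 < N \<Longrightarrow> F2_power_stretch N n (x \<otimes>\<^bsub>F2_power n\<^esub> y) =
     F2_power_stretch N n x \<otimes>\<^bsub>F2_power n\<^esub> F2_power_stretch N n y"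
  by (auto simp: F2_power_stretch_def F2_power_mult f2_stretch_reduce intro!: restrict_ext)

lemma F2_power_stretch_one: "F2_power_stretch N n \<one>\<^bsub>F2_power n\<^esub> = \<one>\<^bsub>F2_power n\<^esub>"
  by (auto simp: F2_power_stretch_def F2_power_one intro!: restrict_ext)

lemma F2_power_stretch_single:
  "F2_power_stretch N n (F2_power_single n j w) = F2_power_single n j (f2_stretch N w)"
  by (auto simp: F2_power_stretch_def F2_power_single_def intro!: restrict_ext)

lemma inj_on_F2_power_stretch: "0 < N \<Longrightarrow> inj_on (F2_power_stretch N n) (carrier (F2_power n))"
proof (rule inj_onI)
  fix x y
  assume "0 < N" and "x \<in> carrier (F2_power n)" "y \<in> carrier (F2_power n)"
    and eq: "F2_power_stretch N n x = F2_power_stretch N n y"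
  show "x = y"
  proof (rule PiE_ext)
    show "x \<in> (\<Pi>\<^sub>E i\<in>{..<n}. {w. f2_reduced w})" "y \<in> (\<Pi>\<^sub>E i\<in>{..<n}. {w. f2_reduced w})"
      using \<open>x \<in> carrier (F2_power n)\<close> \<open>y \<in> carrier (F2_power n)\<close>
      by (simp_all only: F2_power_carrier)
  next
    fix i
    assume "i \<in> {..<n}"
    then show "x i = y i"
      using fun_cong[OF eq, of i] \<open>0 < N\<close> by (simp add: F2_power_stretch_def f2_stretch_inject)
  qed
qed

text \<open>Stated for an idempotent unit rather than via \<open>group_hom\<close>: \<open>F2_power n\<close> is never
  shown to be a group here, since that would need associativity of free reduction.\<close>

lemma hom_one_of_idempotent_one:
  assumes "group G" and "h \<in> hom M G"
    and "\<one>\<^bsub>M\<^esub> \<in> carrier M" and "\<one>\<^bsub>M\<^esub> \<otimes>\<^bsub>M\<^esub> \<one>\<^bsub>M\<^esub> = \<one>\<^bsub>M\<^esub>"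
  shows "h \<one>\<^bsub>M\<^esub> = \<one>\<^bsub>G\<^esub>"
proof -
  have "h \<one>\<^bsub>M\<^esub> \<in> carrier G" and "h \<one>\<^bsub>M\<^esub> \<otimes>\<^bsub>G\<^esub> h \<one>\<^bsub>M\<^esub> = h \<one>\<^bsub>M\<^esub>"
    using assms(2-4) hom_mult[OF assms(2), of "\<one>\<^bsub>M\<^esub>" "\<one>\<^bsub>M\<^esub>"] by (auto simp: hom_def)
  then show ?thesis
    by (metis assms(1) group.l_cancel_one)
qed

lemma hom_F2_power_single_replicate:
  assumes "group G" and h: "h \<in> hom (F2_power n) G"
  shows "h (F2_power_single n j (replicate k l)) = h (F2_power_single n j [l]) [^]\<^bsub>G\<^esub> k"
proof (induction k)
  case 0
  show ?case
    using hom_one_of_idempotent_one[OF assms F2_power_one_closed F2_power_one_mult_one]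
    by (simp add: F2_power_single_Nil)
next
  case (Suc k)
  have "F2_power_single n j (replicate (Suc k) l) =
      F2_power_single n j (replicate k l) \<otimes>\<^bsub>F2_power n\<^esub> F2_power_single n j [l]"
    using f2_reduce_reduced[OF f2_reduced_replicate_append[of "[]" l "Suc k"]]
    by (simp add: F2_power_single_mult replicate_append_same)
  then show ?case
    using Suc.IH h f2_reduced_replicate_append[of "[]" l k]
    by (simp add: hom_mult F2_power_single_closed)
qed

lemma (in group) pow_fact_card_rcosets_mem:
  assumes H: "subgroup H G" and fin: "finite (rcosets H)" and g: "g \<in> carrier G"
  shows "g [^] (fact (card (rcosets H)) :: nat) \<in> H"
proof -
  let ?M = "card (rcosets H)"
  have "(\<lambda>i. H #> g [^] i) ` {0..?M} \<subseteq> rcosets H"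
    using g H by (auto intro!: rcosetsI subgroup.subset)
  then have "\<not> inj_on (\<lambda>i. H #> g [^] i) {0..?M}"
    using card_inj_on_le[OF _ _ fin] by fastforce
  then obtain i j where ij: "i < j" "j \<le> ?M" and eq: "H #> g [^] i = H #> g [^] j"
    unfolding inj_on_def by (metis atLeastAtMost_iff linorder_neqE_nat)
  have "g [^] j \<otimes> inv (g [^] i) \<in> H"
    using eq g H by (intro subgroup.rcos_module_imp[OF H is_group]) (auto simp: rcos_self)
  moreover have "g [^] j \<otimes> inv (g [^] i) = g [^] (j - i)"
  proof -
    have "g [^] j = g [^] (j - i) \<otimes> g [^] i"
      using ij g by (simp add: nat_pow_mult)
    then show ?thesis
      using g by (simp add: m_assoc)
  qed
  ultimately have "g [^] (j - i) \<in> H"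
    by simp
  moreover have "j - i dvd (fact ?M :: nat)"
    using ij by (intro dvd_fact) auto
  then obtain k where "(fact ?M :: nat) = (j - i) * k" ..
  ultimately show ?thesis
    using g subgroup_int_pow_closed[OF H, of "g [^] (j - i)" "int k"]
    by (simp add: nat_pow_pow int_pow_int)
qed

lemma hom_F2_power_stretch_mem_subgroup:
  assumes G: "group G" and H: "subgroup H G" and h: "h \<in> hom (F2_power n) G"
    and N: "0 < N" and pow_mem: "\<And>g. g \<in> carrier G \<Longrightarrow> g [^]\<^bsub>G\<^esub> N \<in> H"
    and x: "x \<in> carrier (F2_power n)"
  shows "h (F2_power_stretch N n x) \<in> H"
  using x
proof (induction x rule: F2_power_induct)
  case one
  show ?case
    using hom_one_of_idempotent_one[OF G h F2_power_one_closed F2_power_one_mult_one]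
      subgroup.one_closed[OF H]
    by (simp add: F2_power_stretch_one)
next
  case (single_mult j l y)
  let ?s = "F2_power_single n j [l]"
  have "h (F2_power_stretch N n (?s \<otimes>\<^bsub>F2_power n\<^esub> y)) =
      h (F2_power_single n j (replicate N l)) \<otimes>\<^bsub>G\<^esub> h (F2_power_stretch N n y)"
    using N h single_mult.hyps f2_reduced_replicate_append[of "[]" l N]
    by (simp add: F2_power_stretch_mult F2_power_stretch_single hom_mult
        F2_power_single_closed F2_power_stretch_closed)
  moreover have "h (F2_power_single n j (replicate N l)) \<in> H"
    using hom_F2_power_single_replicate[OF G h] pow_mem h F2_power_single_closed[of "[l]"]
    by (simp add: hom_in_carrier)
  ultimately show ?case
    using single_mult.IH subgroup.m_closed[OF H] by simp
qed

lemma F2_power_embeds_subgroup_imp: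
  assumes "subgroup H G" and "F2_power_embeds n (G\<lparr>carrier := H\<rparr>)"
  shows "F2_power_embeds n G"
proof -
  obtain h where h: "h \<in> hom (F2_power n) (G\<lparr>carrier := H\<rparr>)" "inj_on h (carrier (F2_power n))"
    using assms(2) unfolding F2_power_embeds_def by blast
  have "h \<in> hom (F2_power n) G"
    using h(1) subgroup.subset[OF assms(1)] unfolding hom_def by auto
  with h(2) show ?thesis
    unfolding F2_power_embeds_def by blast
qed

lemma F2_power_embeds_finite_index_subgroup:
  assumes G: "group G" and H: "subgroup H G" and fin: "finite (rcosets\<^bsub>G\<^esub> H)"
    and "F2_power_embeds n G"
  shows "F2_power_embeds n (G\<lparr>carrier := H\<rparr>)"
proof -
  obtain h where h: "h \<in> hom (F2_power n) G" and inj: "inj_on h (carrier (F2_power n))"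
    using assms(4) unfolding F2_power_embeds_def by blast
  define N :: nat where "N = fact (card (rcosets\<^bsub>G\<^esub> H))"
  have N: "0 < N"
    by (simp add: N_def)
  have pow_mem: "g [^]\<^bsub>G\<^esub> N \<in> H" if "g \<in> carrier G" for g
    unfolding N_def using group.pow_fact_card_rcosets_mem[OF G H fin that] .
  let ?f = "h \<circ> F2_power_stretch N n"
  have "?f \<in> hom (F2_power n) (G\<lparr>carrier := H\<rparr>)"
    using hom_F2_power_stretch_mem_subgroup[OF G H h N pow_mem] h N
    by (auto simp: hom_def F2_power_stretch_mult F2_power_stretch_closed)
  moreover have "inj_on ?f (carrier (F2_power n))"
    using inj_on_F2_power_stretch[OF N] inj F2_power_stretch_closed[OF N]
    by (intro comp_inj_on) (auto intro: inj_on_subset)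
  ultimately show ?thesis
    unfolding F2_power_embeds_def by blast
qed

theorem lemma2p2:
  fixes G :: "('a, 'b) monoid_scheme" and H :: "'a set"
  assumes "group G" and "subgroup H G"
  shows "free_subgroup_rank (G\<lparr>carrier := H\<rparr>) \<le> free_subgroup_rank G \<and>
         (finite (rcosets\<^bsub>G\<^esub> H) \<longrightarrow>
           free_subgroup_rank (G\<lparr>carrier := H\<rparr>) = free_subgroup_rank G)"
proof (intro conjI impI)
  show "free_subgroup_rank (G\<lparr>carrier := H\<rparr>) \<le> free_subgroup_rank G"
    unfolding free_subgroup_rank_def
    by (rule Sup_subset_mono) (auto intro: F2_power_embeds_subgroup_imp[OF assms(2)])
next
  assume "finite (rcosets\<^bsub>G\<^esub> H)"
  then have "F2_power_embeds n (G\<lparr>carrier := H\<rparr>) \<longleftrightarrow> F2_power_embeds n G" for n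
    using F2_power_embeds_subgroup_imp F2_power_embeds_finite_index_subgroup assms by blast
  then show "free_subgroup_rank (G\<lparr>carrier := H\<rparr>) = free_subgroup_rank G"
    unfolding free_subgroup_rank_def by simp
qed

end
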